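(* Let $\mathcal A_{\theta(P)}$ be a set of tuples $(P_1,\dots,P_k)$ each satisfying $\mathcal H_{\theta(P)}$. Suppose that for each $(P_1,\dots,P_k)\in\mathcal A_{\theta(P)}$ the limits $R_T(x,P)$ and $H_T(x,P)$ are continuous and strictly increasing in $x$, and that the estimator $F_{T_n}$ satisfies $$\sup_{x\in\mathbb R}|F_{T_n}(x,\hat P)-H_{T_n}(x,P)|\to0,\qquad \sup_{x\in\mathbb R}|F_{T_n}(x,\hat P_\Pi)-R_{T_n}(x,\hat P)|\to0$$ in probability as $n\to\infty$. Then for each element of $\mathcal A_{\theta(P)}$, $$\sup_{x\in\mathbb R}|H_{F_n}(x,P)-U(x)|\to0,\qquad \sup_{x\in\mathbb R}|R_{F_n}(x,\hat P)-U(x)|\to0$$ in probability, where $U$ is the distribution function of the uniform distribution on $[0,1]$.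
   Context: Setting: $P_1,\dots,P_k$ are distributions on $\mathbb R^{d_P}$; for each $i$, $X_{i1},\dots,X_{in_i}$ are i.i.d. $P_i$, samples jointly independent, $n=\sum n_i$ with $n_i/n\to p_i\in(0,1)$. $Z$ is the $n\times d_P$ matrix stacking the samples (sample $i$ occupying the row index block $\mathcal I_i$). For a permutation $\pi$ of $\{1,\dots,n\}$, $Z_\pi$ is $Z$ with $j$th row replaced by its $\pi(j)$th row, $Z_{\pi i}$ the rows of $Z_\pi$ indexed by $\mathcal I_i$, $\hat P_{\pi i}$ the empirical distribution of $Z_{\pi i}$, $\hat P_\pi=(\hat P_{\pi1},\dots,\hat P_{\pi k})$, $\hat P=\hat P_{\mathrm{id}}$. $\Pi$ is uniform over all $n!$ permutations and independent of $Z$. For a $d$-dimensional functional $\theta$, $\mathcal H_{\theta(P)}$ is the hypothesis $\theta_\ell(P_1)=\dots=\theta_\ell(P_k)$ for all $\ell$. $T_n$ is a real-valued statistic (function of an $n\times d_P$ data matrix); $H_{T_n}(x,P)=\Pr\{T_n(Z)\le x\}$; its permutation distribution is $R_{T_n}(x,\hat P)=\frac1{n!}\sum_\pi1\{T_n(Z_\pi)\le x\}$. $H_T(x,P)$ is the limiting distribution function of $T_n(Z)$ and $R_T(x,P)$ is the probability limit of $R_{T_n}(x,\hat P)$ (at continuity points). $F_{T_n}(x,\hat P_\pi)$ is an estimate of a distribution function, computed from $Z_\pi$. $H_{F_n}(x,P)=\Pr[F_{T_n}\{T_n(Z),\hat P\}\le x]$ and $R_{F_n}(x,\hat P)=\frac1{n!}\sum_\pi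 1[F_{T_n}\{T_n(Z_\pi),\hat P_\pi\}\le x]=\Pr[F_{T_n}\{T_n(Z_\Pi),\hat P_\Pi\}\le x\mid Z]$. *)

theory Defs
  imports "HOL-Probability.Probability" "HOL-Combinatorics.Permutations"
begin

text \<open>Row index block of sample i at stage n (0-based): rows
  S_i, ..., S_i + n_i - 1 with S_i = n_0 + ... + n_(i-1).\<close>
definition block :: "(nat \<Rightarrow> nat \<Rightarrow> nat) \<Rightarrow> nat \<Rightarrow> nat \<Rightarrow> nat set" where
  "block ns n i = {(\<Sum>j<i. ns n j) ..< (\<Sum>j<i. ns n j) + ns n i}"

definition grp :: "nat \<Rightarrow> (nat \<Rightarrow> nat \<Rightarrow> nat) \<Rightarrow> nat \<Rightarrow> nat \<Rightarrow> nat" where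
  "grp k ns n j = (THE i. i < k \<and> j \<in> block ns n i)"

definition sample_law ::
  "(nat \<Rightarrow> (real^'d) measure) \<Rightarrow> nat \<Rightarrow> (nat \<Rightarrow> nat \<Rightarrow> nat) \<Rightarrow> nat \<Rightarrow> (nat \<Rightarrow> real^'d) measure" where
  "sample_law P k ns n = PiM {..<n} (\<lambda>j. P (grp k ns n j))"

definition emp :: "nat \<Rightarrow> (nat \<Rightarrow> nat \<Rightarrow> nat) \<Rightarrow> nat \<Rightarrow> (nat \<Rightarrow> real^'d) \<Rightarrow> nat \<Rightarrow> (real^'d) pmf" where
  "emp k ns n Z i = (if i < k then pmf_of_multiset (image_mset Z (mset_set (block ns n i)))
                     else return_pmf undefined)"

definition perms :: "nat \<Rightarrow> (nat \<Rightarrow> nat) set" where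
  "perms n = {\<pi>. \<pi> permutes {..<n}}"

definition perm_law :: "nat \<Rightarrow> (nat \<Rightarrow> nat) measure" where
  "perm_law n = measure_pmf (pmf_of_set (perms n))"

definition H_Tn where
  "H_Tn P k ns (T :: nat \<Rightarrow> (nat \<Rightarrow> real^'d) \<Rightarrow> real) n x =
     measure (sample_law P k ns n) {Z \<in> space (sample_law P k ns n). T n Z \<le> x}"

definition R_Tn :: "(nat \<Rightarrow> (nat \<Rightarrow> real^'d) \<Rightarrow> real) \<Rightarrow> nat \<Rightarrow> (nat \<Rightarrow> real^'d) \<Rightarrow> real \<Rightarrow> real" where
  "R_Tn T n Z x = (\<Sum>\<pi>\<in>perms n. if T n (Z \<circ> \<pi>) \<le> x then 1 else 0) / fact n"

definition H_Fn where
  "H_Fn P k ns (T :: nat \<Rightarrow> (nat \<Rightarrow> real^'d) \<Rightarrow> real)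
        (F :: nat \<Rightarrow> real \<Rightarrow> (nat \<Rightarrow> (real^'d) pmf) \<Rightarrow> real) n x =
     measure (sample_law P k ns n)
       {Z \<in> space (sample_law P k ns n). F n (T n Z) (emp k ns n Z) \<le> x}"

definition R_Fn where
  "R_Fn k ns (T :: nat \<Rightarrow> (nat \<Rightarrow> real^'d) \<Rightarrow> real)
        (F :: nat \<Rightarrow> real \<Rightarrow> (nat \<Rightarrow> (real^'d) pmf) \<Rightarrow> real) n Z x =
     (\<Sum>\<pi>\<in>perms n. if F n (T n (Z \<circ> \<pi>)) (emp k ns n (Z \<circ> \<pi>)) \<le> x then 1 else 0) / fact n"

definition unif_cdf :: "real \<Rightarrow> real" where
  "unif_cdf x = max 0 (min 1 x)"

text \<open>Convergence in probability of X n to the constant c (M n the law at stage n),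
  formulated with measurable sets of high probability (outer probability), so that
  it coincides with the usual notion whenever the events involved are measurable.\<close>
definition conv_prob :: "(nat \<Rightarrow> 'a measure) \<Rightarrow> (nat \<Rightarrow> 'a \<Rightarrow> real) \<Rightarrow> real \<Rightarrow> bool" where
  "conv_prob M X c \<longleftrightarrow> (\<forall>e>0. \<forall>\<delta>>0. eventually (\<lambda>n.
      \<exists>A\<in>sets (M n). measure (M n) A \<ge> 1 - \<delta> \<and> (\<forall>z\<in>A. \<bar>X n z - c\<bar> \<le> e)) sequentially)"

definition sup_conv_prob :: "(nat \<Rightarrow> 'a measure) \<Rightarrow> (nat \<Rightarrow> 'a \<Rightarrow> real \<Rightarrow> real) \<Rightarrow> bool" where
  "sup_conv_prob M G \<longleftrightarrow> (\<forall>e>0. \<forall>\<delta>>0. eventually (\<lambda>n.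
      \<exists>A\<in>sets (M n). measure (M n) A \<ge> 1 - \<delta> \<and> (\<forall>z\<in>A. \<forall>x. \<bar>G n z x\<bar> \<le> e)) sequentially)"

end

theory Submission
  imports Defs
begin

(* If G is a continuous, strictly increasing distribution function and the law of W is uniformly
   close to G, then the law of G(W) is uniformly close to the uniform distribution on [0,1].
   Pointwise convergence of distribution functions to such a G is uniform (Polya), so
   F_{T_n}(T_n(Z), P-hat) is uniformly close to H_T(T_n(Z)) outside an event of small probability,
   which gives the claim for H_{F_n}. For R_{F_n} the same argument runs conditionally on the data Z,
   with the uniform law of the permutation in place of the law of Z; by Fubini and Markov's
   inequality, for most Z only few permutations are exceptional. *)

definition cont_strict_cdf :: "(real \<Rightarrow> real) \<Rightarrow> bool" where
  "cont_strict_cdf G \<longleftrightarrow>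
     strict_mono G \<and> continuous_on UNIV G \<and> (G \<longlongrightarrow> 0) at_bot \<and> (G \<longlongrightarrow> 1) at_top"

lemma cont_strict_cdf_bounds:
  assumes "cont_strict_cdf G"
  shows "0 < G x" "G x < 1"
proof -
  have sm: "strict_mono G" and l0: "(G \<longlongrightarrow> 0) at_bot" and l1: "(G \<longlongrightarrow> 1) at_top"
    using assms by (auto simp: cont_strict_cdf_def)
  have "eventually (\<lambda>y. G y \<le> G (x - 1)) at_bot"
    unfolding eventually_at_bot_linorder using sm by (auto simp: strict_mono_less_eq)
  then have "0 \<le> G (x - 1)"
    using l0 by (intro tendsto_upperbound) auto
  have "eventually (\<lambda>y. G (x + 1) \<le> G y) at_top"
    unfolding eventually_at_top_linorder using sm by (auto simp: strict_mono_less_eq)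
  then have "G (x + 1) \<le> 1"
    using l1 by (intro tendsto_lowerbound) auto
  show "0 < G x" "G x < 1"
    using \<open>0 \<le> G (x - 1)\<close> \<open>G (x + 1) \<le> 1\<close>
      strict_monoD[OF sm, of "x - 1" x] strict_monoD[OF sm, of x "x + 1"] by auto
qed

lemma cont_strict_cdf_hits:
  assumes "cont_strict_cdf G" "0 < c" "c < 1"
  obtains y where "G y = c"
proof -
  have sm: "strict_mono G" and ct: "continuous_on UNIV G"
    and l0: "(G \<longlongrightarrow> 0) at_bot" and l1: "(G \<longlongrightarrow> 1) at_top"
    using assms(1) by (auto simp: cont_strict_cdf_def)
  obtain a where a: "G a < c"
    using order_tendstoD(2)[OF l0 \<open>0 < c\<close>] by (auto simp: eventually_at_bot_linorder)
  obtain b where b: "c < G b"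
    using order_tendstoD(1)[OF l1 \<open>c < 1\<close>] by (auto simp: eventually_at_top_linorder)
  have "G a < G b"
    using a b by simp
  then have "a \<le> b"
    using sm by (simp add: strict_mono_less)
  with a b ct show ?thesis
    using IVT[of G a c b] that by (auto simp: continuous_on_eq_continuous_at)
qed

lemma mono_close_at_quantiles:
  fixes g G :: "real \<Rightarrow> real"
  assumes sm: "strict_mono G" and "0 < G x" "G x < 1"
    and m: "0 < m" "1 / real m < e"
    and s: "\<And>j. 0 < j \<Longrightarrow> j < m \<Longrightarrow> G (s j) = real j / real m"
    and mono: "mono g" and g01: "\<And>y. 0 \<le> g y \<and> g y \<le> 1"
    and close: "\<And>j. 0 < j \<Longrightarrow> j < m \<Longrightarrow> \<bar>g (s j) - G (s j)\<bar> \<le> e"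
  shows "\<bar>g x - G x\<bar> \<le> 2 * e"
proof -
  have "0 < e"
    using m order.strict_trans[of 0 "1 / real m" e] by simp
  define j where "j = nat \<lfloor>G x * m\<rfloor>"
  have "0 < G x * m" "G x * m < m"
    using \<open>0 < G x\<close> \<open>G x < 1\<close> m by simp_all
  then have "real j \<le> G x * m" "G x * m < real j + 1" and j: "j < m"
    unfolding j_def by (simp_all add: nat_less_iff floor_less_iff)
  then have lo: "real j / m \<le> G x" and hi: "G x < real j / m + 1 / m"
    using m by (simp_all add: pos_divide_le_eq pos_less_divide_eq flip: add_divide_distrib)
  have "G x - 2 * e \<le> g x"
  proof (cases "j = 0")
    case True
    then show ?thesis
      using hi g01[of x] m \<open>0 < e\<close> by simp
  next
    case False
    then have "G (s j) = real j / m"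
      using s j by simp
    then have "g (s j) \<le> g x"
      using lo sm by (metis strict_mono_less_eq monoD[OF mono])
    then show ?thesis
      using close[of j] False j \<open>G (s j) = real j / m\<close> hi m by linarith
  qed
  moreover have "g x \<le> G x + 2 * e"
  proof (cases "Suc j = m")
    case True
    then have "real j / m = 1 - 1 / m"
      using m by (simp add: field_simps)
    then show ?thesis
      using lo g01[of x] m \<open>0 < e\<close> by linarith
  next
    case False
    then have "G (s (Suc j)) = real j / m + 1 / m"
      using s j by (simp add: add_divide_distrib)
    then have "g x \<le> g (s (Suc j))"
      using hi sm by (metis less_imp_le strict_mono_less_eq monoD[OF mono])
    then show ?thesis
      using close[of "Suc j"] False j \<open>G (s (Suc j)) = real j / m + 1 / m\<close> lo m by linarith
  qed
  ultimately show ?thesis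
    by linarith
qed

lemma cont_strict_cdf_finite_grid:
  assumes G: "cont_strict_cdf G" and "0 < e"
  obtains S where "finite S"
    "\<And>g x. mono g \<Longrightarrow> (\<And>y. 0 \<le> g y \<and> g y \<le> 1) \<Longrightarrow> (\<And>s. s \<in> S \<Longrightarrow> \<bar>g s - G s\<bar> \<le> e)
       \<Longrightarrow> \<bar>g x - G x\<bar> \<le> 2 * e"
proof -
  obtain m :: nat where "0 < m" "inverse (real m) < e"
    using ex_inverse_of_nat_less[OF \<open>0 < e\<close>] by blast
  then have m: "0 < m" "1 / real m < e"
    by (simp_all add: inverse_eq_divide)
  have "\<exists>y. G y = real j / real m" if "0 < j" "j < m" for j
    using cont_strict_cdf_hits[OF G, of "real j / real m"] that by auto
  then obtain s where s: "\<And>j. 0 < j \<Longrightarrow> j < m \<Longrightarrow> G (s j) = real j / real m"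
    by metis
  show ?thesis
  proof (rule that[of "s ` {0<..<m}"])
    fix g x
    assume "mono g" "\<And>y. 0 \<le> g y \<and> g y \<le> 1"
      and close: "\<And>t. t \<in> s ` {0<..<m} \<Longrightarrow> \<bar>g t - G t\<bar> \<le> e"
    have "\<bar>g (s j) - G (s j)\<bar> \<le> e" if "0 < j" "j < m" for j
      by (rule close) (use that in auto)
    then show "\<bar>g x - G x\<bar> \<le> 2 * e"
      using G m s \<open>mono g\<close> \<open>\<And>y. 0 \<le> g y \<and> g y \<le> 1\<close> cont_strict_cdf_bounds[OF G, of x]
      by (intro mono_close_at_quantiles[where s = s and m = m]) (auto simp: cont_strict_cdf_def)
  qed simp
qed

lemma cont_strict_cdf_finite_grid_prob:
  assumes G: "cont_strict_cdf G" and "0 < e"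
  obtains S where "finite S"
    "\<And>N W y. prob_space N \<Longrightarrow> W \<in> borel_measurable N \<Longrightarrow>
      (\<And>s. s \<in> S \<Longrightarrow> \<bar>measure N {\<omega> \<in> space N. W \<omega> \<le> s} - G s\<bar> \<le> e) \<Longrightarrow>
      \<bar>measure N {\<omega> \<in> space N. W \<omega> \<le> y} - G y\<bar> \<le> 2 * e"
proof -
  obtain S where "finite S" and grid: "\<And>g x. mono g \<Longrightarrow> (\<And>y. 0 \<le> g y \<and> g y \<le> 1) \<Longrightarrow>
      (\<And>s. s \<in> S \<Longrightarrow> \<bar>g s - G s\<bar> \<le> e) \<Longrightarrow> \<bar>g x - G x\<bar> \<le> 2 * e"
    using cont_strict_cdf_finite_grid[OF G \<open>0 < e\<close>] by blast
  show ?thesis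
  proof (rule that[OF \<open>finite S\<close>])
    fix N W y
    assume "prob_space N" and W: "W \<in> borel_measurable N"
      and close: "\<And>s. s \<in> S \<Longrightarrow> \<bar>measure N {\<omega> \<in> space N. W \<omega> \<le> s} - G s\<bar> \<le> e"
    interpret prob_space N by fact
    show "\<bar>prob {\<omega> \<in> space N. W \<omega> \<le> y} - G y\<bar> \<le> 2 * e"
    proof (rule grid)
      show "mono (\<lambda>y. prob {\<omega> \<in> space N. W \<omega> \<le> y})"
        using W by (intro monoI finite_measure_mono) auto
    qed (use close in auto)
  qed
qed

lemma unif_cdf_shift_le: "0 \<le> c \<Longrightarrow> unif_cdf (x + c) \<le> unif_cdf x + c"
  by (simp add: unif_cdf_def)

lemma prob_integral_transform_approx:
  assumes N: "prob_space N" and G: "cont_strict_cdf G"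
    and approx: "\<And>y. \<bar>measure N {\<omega> \<in> space N. W \<omega> \<le> y} - G y\<bar> \<le> d"
  shows "\<bar>measure N {\<omega> \<in> space N. G (W \<omega>) \<le> c} - unif_cdf c\<bar> \<le> d"
proof -
  interpret prob_space N by fact
  have "0 \<le> d"
    using approx[of 0] by linarith
  consider "c \<le> 0" | "1 \<le> c" | "0 < c" "c < 1"
    by linarith
  then show ?thesis
  proof cases
    case 1
    then have "{\<omega> \<in> space N. G (W \<omega>) \<le> c} = {}"
      using cont_strict_cdf_bounds(1)[OF G] by (auto simp: not_le intro: order.strict_trans1)
    then have "measure N {\<omega> \<in> space N. G (W \<omega>) \<le> c} = 0"
      by (simp only: measure_empty)
    then show ?thesis
      using 1 \<open>0 \<le> d\<close> by (simp add: unif_cdf_def)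
  next
    case 2
    then have "{\<omega> \<in> space N. G (W \<omega>) \<le> c} = space N"
      using cont_strict_cdf_bounds(2)[OF G] by (auto intro: less_imp_le order.strict_trans2)
    then have "measure N {\<omega> \<in> space N. G (W \<omega>) \<le> c} = 1"
      by (simp only: prob_space)
    then show ?thesis
      using 2 \<open>0 \<le> d\<close> by (simp add: unif_cdf_def prob_space)
  next
    case 3
    then obtain y where "G y = c"
      by (rule cont_strict_cdf_hits[OF G])
    then have "{\<omega> \<in> space N. G (W \<omega>) \<le> c} = {\<omega> \<in> space N. W \<omega> \<le> y}"
      using G by (auto simp: cont_strict_cdf_def strict_mono_less_eq)
    then show ?thesis
      using approx[of y] 3 \<open>G y = c\<close> by (simp add: unif_cdf_def)
  qed
qed

lemma prob_integral_transform_perturbed: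
  assumes N: "prob_space N" and G: "cont_strict_cdf G"
    and W: "W \<in> borel_measurable N"
    and approx: "\<And>y. \<bar>measure N {\<omega> \<in> space N. W \<omega> \<le> y} - G y\<bar> \<le> d"
    and B: "B \<in> sets N" "measure N B \<le> \<eta>"
    and close: "\<And>\<omega>. \<omega> \<in> space N - B \<Longrightarrow> \<bar>\<Phi> \<omega> - G (W \<omega>)\<bar> \<le> c" and "0 \<le> c"
    and \<Phi>: "{\<omega> \<in> space N. \<Phi> \<omega> \<le> x} \<in> sets N"
  shows "\<bar>measure N {\<omega> \<in> space N. \<Phi> \<omega> \<le> x} - unif_cdf x\<bar> \<le> d + \<eta> + c"
proof -
  interpret prob_space N by fact
  have [measurable]: "G \<in> borel_measurable borel"
    using G by (auto simp: cont_strict_cdf_def intro: borel_measurable_continuous_onI)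
  note W[measurable]
  let ?X = "{\<omega> \<in> space N. \<Phi> \<omega> \<le> x}"
  let ?L = "\<lambda>t. {\<omega> \<in> space N. G (W \<omega>) \<le> t}"
  have L: "?L t \<in> events" for t
    by measurable
  have L_approx: "\<bar>measure N (?L t) - unif_cdf t\<bar> \<le> d" for t
    by (rule prob_integral_transform_approx[OF N G approx])
  have "?X \<subseteq> B \<union> ?L (x + c)"
    using close by (force simp: abs_le_iff)
  then have "measure N ?X \<le> measure N B + measure N (?L (x + c))"
    using B(1) L by (meson finite_measure_mono measure_Un_le order_trans sets.Un)
  also have "\<dots> \<le> unif_cdf x + (d + \<eta> + c)"
    using B(2) L_approx[of "x + c"] unif_cdf_shift_le[OF \<open>0 \<le> c\<close>, of x] by (simp add: abs_le_iff)
  finally have upper: "measure N ?X \<le> unif_cdf x + (d + \<eta> + c)" .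
  have "?L (x - c) \<subseteq> ?X \<union> B"
    using close by (force simp: abs_le_iff)
  then have "measure N (?L (x - c)) \<le> measure N ?X + measure N B"
    using B(1) \<Phi> by (meson finite_measure_mono measure_Un_le order_trans sets.Un)
  moreover have "unif_cdf x - c \<le> unif_cdf (x - c)"
    using unif_cdf_shift_le[OF \<open>0 \<le> c\<close>, of "x - c"] by simp
  ultimately have lower: "unif_cdf x - (d + \<eta> + c) \<le> measure N ?X"
    using B(2) L_approx[of "x - c"] by (simp add: abs_le_iff)
  from upper lower show ?thesis
    by (simp add: abs_le_iff)
qed

lemma prob_integral_transform_estimated_cdf:
  assumes N: "prob_space N" and G: "cont_strict_cdf G" and T: "T \<in> borel_measurable N"
    and H_G: "\<And>y. \<bar>measure N {\<omega> \<in> space N. T \<omega> \<le> y} - G y\<bar> \<le> d"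
    and A: "A \<in> sets N" "1 - \<eta> \<le> measure N A"
    and \<Phi>_H: "\<And>\<omega> x. \<omega> \<in> A \<Longrightarrow> \<bar>\<Phi> \<omega> x - measure N {\<omega> \<in> space N. T \<omega> \<le> x}\<bar> \<le> c" and "0 \<le> c"
    and \<Phi>: "{\<omega> \<in> space N. \<Phi> \<omega> (T \<omega>) \<le> x} \<in> sets N"
  shows "\<bar>measure N {\<omega> \<in> space N. \<Phi> \<omega> (T \<omega>) \<le> x} - unif_cdf x\<bar> \<le> d + \<eta> + (c + d)"
proof (rule prob_integral_transform_perturbed[OF N G T H_G])
  show "space N - A \<in> sets N" "measure N (space N - A) \<le> \<eta>"
    using A prob_space.prob_compl[OF N A(1)] by auto
  show "\<bar>\<Phi> \<omega> (T \<omega>) - G (T \<omega>)\<bar> \<le> c + d" if "\<omega> \<in> space N - (space N - A)" for \<omega>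
    using \<Phi>_H[of \<omega> "T \<omega>"] H_G[of "T \<omega>"] that by auto
  show "0 \<le> c + d"
    using \<open>0 \<le> c\<close> H_G[of 0] by linarith
qed (rule \<Phi>)

lemma (in prob_space) prob_Int_ge:
  assumes "A \<in> events" "B \<in> events"
  shows "prob A + prob B - 1 \<le> prob (A \<inter> B)"
proof -
  have "prob (A \<union> B) = prob A + prob B - prob (A \<inter> B)"
    using assms by (intro measure_Un3) (auto simp: fmeasurable_eq_sets)
  then show ?thesis
    using prob_le_1[of "A \<union> B"] by simp
qed

lemma conv_prob_simultaneous:
  assumes M: "\<And>n. prob_space (M n)" and S: "finite S"
    and conv: "\<And>s. s \<in> S \<Longrightarrow> conv_prob M (X s) (c s)" and "0 < e" "0 < \<delta>"
  shows "eventually (\<lambda>n. \<exists>A\<in>sets (M n). 1 - \<delta> \<le> measure (M n) A \<and>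
           (\<forall>z\<in>A. \<forall>s\<in>S. \<bar>X s n z - c s\<bar> \<le> e)) sequentially"
proof -
  define \<delta>' where "\<delta>' = \<delta> / (real (card S) + 1)"
  have "0 < \<delta>'" and card_\<delta>': "real (card S) * \<delta>' \<le> \<delta>"
    using \<open>0 < \<delta>\<close> by (auto simp: \<delta>'_def field_simps)
  have "eventually (\<lambda>n. \<forall>s\<in>S. \<exists>A\<in>sets (M n). 1 - \<delta>' \<le> measure (M n) A \<and>
          (\<forall>z\<in>A. \<bar>X s n z - c s\<bar> \<le> e)) sequentially"
    using S by (rule eventually_ball_finite) (use conv \<open>0 < e\<close> \<open>0 < \<delta>'\<close> in \<open>auto simp: conv_prob_def\<close>)
  then show ?thesis
  proof eventually_elim
    case (elim n)
    interpret prob_space "M n" by (rule M)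
    obtain A where A: "\<And>s. s \<in> S \<Longrightarrow>
        A s \<in> events \<and> 1 - \<delta>' \<le> prob (A s) \<and> (\<forall>z\<in>A s. \<bar>X s n z - c s\<bar> \<le> e)"
      using elim by metis
    define Bad where "Bad = (\<Union>s\<in>S. space (M n) - A s)"
    have Bad: "Bad \<in> events"
      unfolding Bad_def using A S by (intro sets.finite_UN) auto
    have "prob Bad \<le> (\<Sum>s\<in>S. prob (space (M n) - A s))"
      unfolding Bad_def using A S by (intro measure_UNION_le) auto
    also have "\<dots> \<le> real (card S) * \<delta>'"
      using A by (intro sum_bounded_above) (force simp: prob_compl)
    finally have "prob Bad \<le> \<delta>"
      using card_\<delta>' by linarith
    then show ?case
      using Bad A by (intro bexI[of _ "space (M n) - Bad"]) (auto simp: prob_compl Bad_def)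
  qed
qed

lemma (in prob_space) nn_integral_Markov_prob:
  assumes [measurable]: "u \<in> borel_measurable M"
    and "(\<integral>\<^sup>+z. u z \<partial>M) \<le> ennreal d" "0 < \<eta>" "0 \<le> d"
  shows "prob {z \<in> space M. ennreal \<eta> \<le> u z} \<le> d / \<eta>"
proof -
  let ?S = "{z \<in> space M. ennreal \<eta> \<le> u z}"
  have S: "?S \<in> events"
    by measurable
  have "ennreal (\<eta> * prob ?S) = (\<integral>\<^sup>+z. ennreal \<eta> * indicator ?S z \<partial>M)"
    using S \<open>0 < \<eta>\<close> by (simp add: nn_integral_cmult_indicator emeasure_eq_measure ennreal_mult)
  also have "\<dots> \<le> (\<integral>\<^sup>+z. u z \<partial>M)"
    by (intro nn_integral_mono) (simp add: indicator_def)
  also have "\<dots> \<le> ennreal d"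
    by fact
  finally show ?thesis
    using \<open>0 < \<eta>\<close> \<open>0 \<le> d\<close> by (simp add: ennreal_le_iff pos_le_divide_eq mult.commute)
qed

lemma pair_measure_sections_small:
  assumes M: "prob_space M" and Q: "prob_space Q"
    and C: "C \<in> sets (M \<Otimes>\<^sub>M Q)" "1 - d \<le> measure (M \<Otimes>\<^sub>M Q) C" and "0 < \<eta>"
  obtains B where "B \<in> sets M" "1 - d / \<eta> \<le> measure M B"
    "\<And>z. z \<in> B \<Longrightarrow> 1 - \<eta> \<le> measure Q {\<pi> \<in> space Q. (z, \<pi>) \<in> C}"
proof -
  interpret M: prob_space M by fact
  interpret Q: prob_space Q by fact
  interpret P: pair_prob_space M Q ..
  have "0 \<le> d"
    using C(2) P.prob_le_1[of C] by linarith
  define D where "D = space (M \<Otimes>\<^sub>M Q) - C"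
  define u where "u z = emeasure Q (Pair z -` D)" for z
  have D: "D \<in> sets (M \<Otimes>\<^sub>M Q)"
    using C(1) by (simp add: D_def)
  have [measurable]: "u \<in> borel_measurable M"
    unfolding u_def using D by (rule Q.measurable_emeasure_Pair)
  have "(\<integral>\<^sup>+z. u z \<partial>M) = emeasure (M \<Otimes>\<^sub>M Q) D"
    unfolding u_def using D by (rule Q.emeasure_pair_measure_alt[symmetric])
  also have "\<dots> = ennreal (1 - measure (M \<Otimes>\<^sub>M Q) C)"
    using P.prob_compl[OF C(1)] by (simp add: D_def P.emeasure_eq_measure)
  also have "\<dots> \<le> ennreal d"
    using C(2) by (intro ennreal_leI) simp
  finally have "M.prob {z \<in> space M. ennreal \<eta> \<le> u z} \<le> d / \<eta>"
    using \<open>0 < \<eta>\<close> \<open>0 \<le> d\<close> by (intro M.nn_integral_Markov_prob) auto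
  show ?thesis
  proof (rule that[of "{z \<in> space M. u z < ennreal \<eta>}"])
    show "{z \<in> space M. u z < ennreal \<eta>} \<in> sets M"
      by measurable
    have "{z \<in> space M. u z < ennreal \<eta>} = space M - {z \<in> space M. ennreal \<eta> \<le> u z}"
      by auto
    moreover have "{z \<in> space M. ennreal \<eta> \<le> u z} \<in> sets M"
      by measurable
    ultimately show "1 - d / \<eta> \<le> measure M {z \<in> space M. u z < ennreal \<eta>}"
      using M.prob_compl \<open>M.prob _ \<le> d / \<eta>\<close> by simp
    fix z
    assume "z \<in> {z \<in> space M. u z < ennreal \<eta>}"
    moreover have "Pair z -` D = space Q - Pair z -` C" if "z \<in> space M"
      using that by (auto simp: D_def space_pair_measure)
    ultimately have "Q.prob (space Q - Pair z -` C) < \<eta>"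
      using \<open>0 < \<eta>\<close> by (simp add: u_def Q.emeasure_eq_measure ennreal_less_iff)
    moreover have "{\<pi> \<in> space Q. (z, \<pi>) \<in> C} = Pair z -` C"
      using sets.sets_into_space[OF sets_Pair1[OF C(1)]] by auto
    ultimately show "1 - \<eta> \<le> measure Q {\<pi> \<in> space Q. (z, \<pi>) \<in> C}"
      using Q.prob_compl[OF sets_Pair1[OF C(1)]] by simp
  qed
qed

lemma estimated_cdf_at_statistic_uniform:
  fixes M :: "nat \<Rightarrow> 'z measure" and T :: "nat \<Rightarrow> 'z \<Rightarrow> real" and \<Phi> :: "nat \<Rightarrow> 'z \<Rightarrow> real \<Rightarrow> real"
  assumes M: "\<And>n. prob_space (M n)" and T: "\<And>n. T n \<in> borel_measurable (M n)"
    and \<Phi>: "\<And>n x. {z \<in> space (M n). \<Phi> n z (T n z) \<le> x} \<in> sets (M n)"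
    and G: "cont_strict_cdf G"
    and H_lim: "\<And>x. (\<lambda>n. measure (M n) {z \<in> space (M n). T n z \<le> x}) \<longlonglongrightarrow> G x"
    and \<Phi>_H: "sup_conv_prob M (\<lambda>n z x. \<Phi> n z x - measure (M n) {z \<in> space (M n). T n z \<le> x})"
    and "0 < e"
  shows "eventually (\<lambda>n. \<forall>x.
           \<bar>measure (M n) {z \<in> space (M n). \<Phi> n z (T n z) \<le> x} - unif_cdf x\<bar> \<le> e) sequentially"
proof -
  define H where "H n x = measure (M n) {z \<in> space (M n). T n z \<le> x}" for n x
  define e' where "e' = e / 6"
  have "0 < e'"
    using \<open>0 < e\<close> by (simp add: e'_def)
  obtain S where "finite S" and grid: "\<And>(N :: 'z measure) W y. prob_space N \<Longrightarrow> W \<in> borel_measurable N \<Longrightarrow>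
      (\<And>s. s \<in> S \<Longrightarrow> \<bar>measure N {\<omega> \<in> space N. W \<omega> \<le> s} - G s\<bar> \<le> e') \<Longrightarrow>
      \<bar>measure N {\<omega> \<in> space N. W \<omega> \<le> y} - G y\<bar> \<le> 2 * e'"
    using cont_strict_cdf_finite_grid_prob[OF G \<open>0 < e'\<close>] by blast
  have "eventually (\<lambda>n. \<forall>s\<in>S. \<bar>H n s - G s\<bar> \<le> e') sequentially"
    using \<open>finite S\<close>
  proof (rule eventually_ball_finite, intro ballI)
    fix s
    show "eventually (\<lambda>n. \<bar>H n s - G s\<bar> \<le> e') sequentially"
      using tendstoD[OF H_lim[of s] \<open>0 < e'\<close>] by eventually_elim (simp add: H_def dist_real_def)
  qed
  moreover have "eventually (\<lambda>n. \<exists>A\<in>sets (M n). 1 - e' \<le> measure (M n) A \<and>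
      (\<forall>z\<in>A. \<forall>x. \<bar>\<Phi> n z x - H n x\<bar> \<le> e')) sequentially"
    using \<Phi>_H \<open>0 < e'\<close> unfolding sup_conv_prob_def H_def by blast
  ultimately show ?thesis
  proof eventually_elim
    case (elim n)
    interpret prob_space "M n" by (rule M)
    obtain A where A: "A \<in> events" "1 - e' \<le> prob A" "\<And>z x. z \<in> A \<Longrightarrow> \<bar>\<Phi> n z x - H n x\<bar> \<le> e'"
      using elim(2) by blast
    have H_unif: "\<bar>H n y - G y\<bar> \<le> 2 * e'" for y
      unfolding H_def using elim(1) by (intro grid[OF M T]) (simp add: H_def)
    show ?case
    proof
      fix x
      have "\<bar>prob {z \<in> space (M n). \<Phi> n z (T n z) \<le> x} - unif_cdf x\<bar> \<le> 2 * e' + e' + (e' + 2 * e')"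
        using \<open>0 < e'\<close> by (intro prob_integral_transform_estimated_cdf[OF M G T
              H_unif[unfolded H_def] A(1,2) A(3)[unfolded H_def] _ \<Phi>]) auto
      then show "\<bar>prob {z \<in> space (M n). \<Phi> n z (T n z) \<le> x} - unif_cdf x\<bar> \<le> e"
        by (simp add: e'_def)
    qed
  qed
qed

lemma permutation_cdf_of_estimated_cdf_uniform:
  fixes M :: "nat \<Rightarrow> 'z measure" and Q :: "nat \<Rightarrow> 'p pmf" and W :: "nat \<Rightarrow> 'z \<Rightarrow> 'p \<Rightarrow> real"
    and \<Phi> :: "nat \<Rightarrow> 'z \<Rightarrow> 'p \<Rightarrow> real \<Rightarrow> real"
  assumes M: "\<And>n. prob_space (M n)" and G: "cont_strict_cdf G"
    and R_lim: "\<And>x. conv_prob M (\<lambda>n z. measure (Q n) {\<pi>. W n z \<pi> \<le> x}) (G x)"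
    and \<Phi>_R: "sup_conv_prob (\<lambda>n. M n \<Otimes>\<^sub>M Q n)
                (\<lambda>n (z, \<pi>) x. \<Phi> n z \<pi> x - measure (Q n) {\<pi>. W n z \<pi> \<le> x})"
  shows "sup_conv_prob M (\<lambda>n z x. measure (Q n) {\<pi>. \<Phi> n z \<pi> (W n z \<pi>) \<le> x} - unif_cdf x)"
  unfolding sup_conv_prob_def
proof (intro allI impI)
  fix e \<delta> :: real
  assume "0 < e" "0 < \<delta>"
  define R where "R n z x = measure (Q n) {\<pi>. W n z \<pi> \<le> x}" for n z x
  define e' where "e' = e / 6"
  have "0 < e'"
    using \<open>0 < e\<close> by (simp add: e'_def)
  obtain S where "finite S" and grid: "\<And>(N :: 'p measure) W y. prob_space N \<Longrightarrow> W \<in> borel_measurable N \<Longrightarrow>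
      (\<And>s. s \<in> S \<Longrightarrow> \<bar>measure N {\<omega> \<in> space N. W \<omega> \<le> s} - G s\<bar> \<le> e') \<Longrightarrow>
      \<bar>measure N {\<omega> \<in> space N. W \<omega> \<le> y} - G y\<bar> \<le> 2 * e'"
    using cont_strict_cdf_finite_grid_prob[OF G \<open>0 < e'\<close>] by blast
  have "eventually (\<lambda>n. \<exists>A\<in>sets (M n). 1 - \<delta> / 2 \<le> measure (M n) A \<and>
      (\<forall>z\<in>A. \<forall>s\<in>S. \<bar>R n z s - G s\<bar> \<le> e')) sequentially"
    unfolding R_def using M \<open>finite S\<close> R_lim \<open>0 < e'\<close> by (rule conv_prob_simultaneous) (use \<open>0 < \<delta>\<close> in simp)
  \<comment> \<open>Markov's inequality, via pair_measure_sections_small with threshold e', turns the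
    bound \<delta> e' / 2 on the joint exceptional set into \<delta> / 2 on the exceptional data.\<close>
  moreover have "eventually (\<lambda>n. \<exists>C\<in>sets (M n \<Otimes>\<^sub>M Q n). 1 - \<delta> * e' / 2 \<le> measure (M n \<Otimes>\<^sub>M Q n) C \<and>
      (\<forall>(z, \<pi>)\<in>C. \<forall>x. \<bar>\<Phi> n z \<pi> x - R n z x\<bar> \<le> e')) sequentially"
    using \<Phi>_R \<open>0 < e'\<close> \<open>0 < \<delta>\<close> unfolding sup_conv_prob_def R_def by (auto simp: case_prod_beta)
  ultimately show "eventually (\<lambda>n. \<exists>B\<in>sets (M n). 1 - \<delta> \<le> measure (M n) B \<and>
      (\<forall>z\<in>B. \<forall>x. \<bar>measure (Q n) {\<pi>. \<Phi> n z \<pi> (W n z \<pi>) \<le> x} - unif_cdf x\<bar> \<le> e)) sequentially"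
  proof eventually_elim
    case (elim n)
    interpret prob_space "M n" by (rule M)
    obtain A where A: "A \<in> events" "1 - \<delta> / 2 \<le> prob A" "\<And>z s. z \<in> A \<Longrightarrow> s \<in> S \<Longrightarrow> \<bar>R n z s - G s\<bar> \<le> e'"
      using elim(1) by blast
    obtain C where C: "C \<in> sets (M n \<Otimes>\<^sub>M Q n)" "1 - \<delta> * e' / 2 \<le> measure (M n \<Otimes>\<^sub>M Q n) C"
      "\<And>z \<pi> x. (z, \<pi>) \<in> C \<Longrightarrow> \<bar>\<Phi> n z \<pi> x - R n z x\<bar> \<le> e'"
      using elim(2) by blast
    obtain B where B: "B \<in> events" "1 - \<delta> * e' / 2 / e' \<le> prob B"
      "\<And>z. z \<in> B \<Longrightarrow> 1 - e' \<le> measure (Q n) {\<pi>. (z, \<pi>) \<in> C}"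
      using pair_measure_sections_small[OF M prob_space_measure_pmf C(1,2) \<open>0 < e'\<close>] by auto
    have "1 - \<delta> \<le> prob (A \<inter> B)"
      using prob_Int_ge[OF A(1) B(1)] A(2) B(2) \<open>0 < e'\<close> by simp
    moreover have "\<bar>measure (Q n) {\<pi>. \<Phi> n z \<pi> (W n z \<pi>) \<le> x} - unif_cdf x\<bar> \<le> e"
      if "z \<in> A \<inter> B" for z x
    proof -
      have R_unif: "\<bar>R n z y - G y\<bar> \<le> 2 * e'" for y
        using grid[OF prob_space_measure_pmf, of "W n z" "Q n"] A(3) that by (simp add: R_def)
      have "\<bar>measure (Q n) {\<pi> \<in> space (Q n). \<Phi> n z \<pi> (W n z \<pi>) \<le> x} - unif_cdf x\<bar>
          \<le> 2 * e' + e' + (e' + 2 * e')"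
        using B(3) that C(3) R_unif \<open>0 < e'\<close>
        by (intro prob_integral_transform_estimated_cdf[OF prob_space_measure_pmf G,
              where A = "{\<pi>. (z, \<pi>) \<in> C}"]) (auto simp: R_def)
      then show ?thesis
        by (simp add: e'_def)
    qed
    ultimately show ?case
      using A(1) B(1) by blast
  qed
qed

lemma partial_sums_locate:
  fixes f :: "nat \<Rightarrow> nat"
  assumes "j < (\<Sum>i<k. f i)"
  shows "\<exists>!i. i < k \<and> j \<in> {(\<Sum>l<i. f l) ..< (\<Sum>l<i. f l) + f i}"
proof (rule ex_ex1I)
  show "\<exists>i. i < k \<and> j \<in> {(\<Sum>l<i. f l) ..< (\<Sum>l<i. f l) + f i}"
    using assms
  proof (induction k)
    case (Suc k)
    show ?case
    proof (cases "j < (\<Sum>l<k. f l)")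
      case True
      with Suc.IH show ?thesis
        by (auto intro: less_SucI)
    next
      case False
      with Suc.prems show ?thesis
        by (intro exI[of _ k]) auto
    qed
  qed simp
next
  have block_below: "(\<Sum>l<i. f l) + f i \<le> (\<Sum>l<i'. f l)" if "i < i'" for i i'
  proof -
    have "(\<Sum>l<i. f l) + f i = (\<Sum>l<Suc i. f l)"
      by simp
    also have "\<dots> \<le> (\<Sum>l<i'. f l)"
      using that by (intro sum_mono2) auto
    finally show ?thesis .
  qed
  show "i = i'" if "i < k \<and> j \<in> {(\<Sum>l<i. f l) ..< (\<Sum>l<i. f l) + f i}"
    and "i' < k \<and> j \<in> {(\<Sum>l<i'. f l) ..< (\<Sum>l<i'. f l) + f i'}" for i i'
    using that block_below[of i i'] block_below[of i' i] by (cases i i' rule: linorder_cases) auto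
qed

lemma grp_less:
  assumes "(\<Sum>i<k. ns n i) = n" "j < n"
  shows "grp k ns n j < k"
  using theI'[OF partial_sums_locate[where f = "ns n" and j = j and k = k]] assms
  by (simp add: grp_def block_def)

lemma prob_space_sample_law:
  assumes "\<And>i. i < k \<Longrightarrow> prob_space (P i)" "(\<Sum>i<k. ns n i) = n"
  shows "prob_space (sample_law P k ns n)"
  unfolding sample_law_def using assms grp_less by (intro prob_space_PiM) auto

lemma perms_average_eq_perm_law:
  "(\<Sum>\<pi>\<in>perms n. if Q \<pi> then 1 else 0) / fact n = measure (perm_law n) {\<pi>. Q \<pi>}"
proof -
  have "perms n \<noteq> {}"
    using permutes_id[of "{..<n}"] unfolding perms_def by blast
  moreover have "finite (perms n)" "card (perms n) = fact n"
    by (simp_all add: perms_def finite_permutations card_permutations)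
  ultimately show ?thesis
    by (simp add: perm_law_def measure_pmf_of_set sum.If_cases Int_def conj_commute)
qed

lemma R_Tn_eq_perm_law: "R_Tn T n Z x = measure (perm_law n) {\<pi>. T n (Z \<circ> \<pi>) \<le> x}"
  unfolding R_Tn_def by (rule perms_average_eq_perm_law)

lemma R_Fn_eq_perm_law:
  "R_Fn k ns T F n Z x = measure (perm_law n) {\<pi>. F n (T n (Z \<circ> \<pi>)) (emp k ns n (Z \<circ> \<pi>)) \<le> x}"
  unfolding R_Fn_def by (rule perms_average_eq_perm_law)

lemma measurable_plug_in:
  assumes "T \<in> borel_measurable M" "(\<lambda>(x, z). \<Phi> x z) \<in> borel_measurable (borel \<Otimes>\<^sub>M M)"
  shows "(\<lambda>z. \<Phi> (T z) z) \<in> borel_measurable M"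
proof -
  have "(\<lambda>z. (T z, z)) \<in> M \<rightarrow>\<^sub>M borel \<Otimes>\<^sub>M M"
    using assms(1) by measurable
  from measurable_compose[OF this assms(2)] show ?thesis
    by simp
qed

theorem theorem2:
  fixes k :: nat
    and P :: "nat \<Rightarrow> (real^'d) measure"
    and \<theta> :: "(real^'d) measure \<Rightarrow> real^'e"
    and ns :: "nat \<Rightarrow> nat \<Rightarrow> nat"
    and p :: "nat \<Rightarrow> real"
    and T :: "nat \<Rightarrow> (nat \<Rightarrow> real^'d) \<Rightarrow> real"
    and F :: "nat \<Rightarrow> real \<Rightarrow> (nat \<Rightarrow> (real^'d) pmf) \<Rightarrow> real"
    and HT RT :: "real \<Rightarrow> real"
  assumes P_prob: "\<And>i. i < k \<Longrightarrow> prob_space (P i)"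
    and P_borel: "\<And>i. i < k \<Longrightarrow> sets (P i) = sets borel"
    and null_hyp: "\<And>i. i < k \<Longrightarrow> \<theta> (P i) = \<theta> (P 0)"
    and sizes: "\<And>n. (\<Sum>i<k. ns n i) = n"
    and ratios: "\<And>i. i < k \<Longrightarrow> (\<lambda>n. real (ns n i) / real n) \<longlonglongrightarrow> p i"
    and p_range: "\<And>i. i < k \<Longrightarrow> 0 < p i \<and> p i < 1"
    and T_meas: "\<And>n. T n \<in> borel_measurable (sample_law P k ns n)"
    and F_meas: "\<And>n. (\<lambda>(x, Z). F n x (emp k ns n Z))
                        \<in> borel_measurable (borel \<Otimes>\<^sub>M sample_law P k ns n)"
    and HT_lim: "\<And>x. (\<lambda>n. H_Tn P k ns T n x) \<longlonglongrightarrow> HT x"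
    and HT_cdf: "(HT \<longlongrightarrow> 0) at_bot" "(HT \<longlongrightarrow> 1) at_top"
    and HT_cont: "continuous_on UNIV HT"
    and HT_strict: "strict_mono HT"
    and RT_lim: "\<And>x. conv_prob (sample_law P k ns) (\<lambda>n Z. R_Tn T n Z x) (RT x)"
    and RT_cdf: "(RT \<longlongrightarrow> 0) at_bot" "(RT \<longlongrightarrow> 1) at_top"
    and RT_cont: "continuous_on UNIV RT"
    and RT_strict: "strict_mono RT"
    and F_H: "sup_conv_prob (sample_law P k ns)
                (\<lambda>n Z x. F n x (emp k ns n Z) - H_Tn P k ns T n x)"
    and F_R: "sup_conv_prob (\<lambda>n. sample_law P k ns n \<Otimes>\<^sub>M perm_law n)
                (\<lambda>n (Z, \<pi>) x. F n x (emp k ns n (Z \<circ> \<pi>)) - R_Tn T n Z x)"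
  shows "(\<forall>e>0. eventually (\<lambda>n. \<forall>x. \<bar>H_Fn P k ns T F n x - unif_cdf x\<bar> \<le> e) sequentially)
         \<and> sup_conv_prob (sample_law P k ns) (\<lambda>n Z x. R_Fn k ns T F n Z x - unif_cdf x)"
proof -
  let ?M = "sample_law P k ns"
  have M: "prob_space (?M n)" for n
    using P_prob sizes by (rule prob_space_sample_law)
  have "cont_strict_cdf HT" "cont_strict_cdf RT"
    using HT_cdf HT_cont HT_strict RT_cdf RT_cont RT_strict by (simp_all add: cont_strict_cdf_def)
  have F_T_sets: "{Z \<in> space (?M n). F n (T n Z) (emp k ns n Z) \<le> x} \<in> sets (?M n)" for n x
    using measurable_plug_in[OF T_meas F_meas[of n]] by measurable
  have "\<forall>e>0. eventually (\<lambda>n. \<forall>x. \<bar>H_Fn P k ns T F n x - unif_cdf x\<bar> \<le> e) sequentially"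
    unfolding H_Fn_def
    using estimated_cdf_at_statistic_uniform[where \<Phi> = "\<lambda>n Z x. F n x (emp k ns n Z)",
        OF M T_meas F_T_sets \<open>cont_strict_cdf HT\<close> HT_lim[unfolded H_Tn_def] F_H[unfolded H_Tn_def]]
    by blast
  moreover have "sup_conv_prob ?M (\<lambda>n Z x. R_Fn k ns T F n Z x - unif_cdf x)"
    unfolding R_Fn_eq_perm_law perm_law_def
    by (rule permutation_cdf_of_estimated_cdf_uniform[where W = "\<lambda>n Z \<pi>. T n (Z \<circ> \<pi>)"
          and \<Phi> = "\<lambda>n Z \<pi> x. F n x (emp k ns n (Z \<circ> \<pi>))", OF M \<open>cont_strict_cdf RT\<close>
          RT_lim[unfolded R_Tn_eq_perm_law perm_law_def] F_R[unfolded R_Tn_eq_perm_law perm_law_def]])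
  ultimately show ?thesis ..
qed

end
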